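(* The group $\mathbb{G}=\mathrm{Aut}(\mathbf{R},<)$ is split.
   Context: $\mathbb{G}$ is the group of order-preserving bijections of $\mathbf{R}$, topologized so that pointwise stabilizers of finite subsets of $\mathbf{R}$ form a neighborhood basis of the identity; it is a pro-oligomorphic group. A pro-oligomorphic group $G$ is split if for every pro-oligomorphic group $H$ (Hausdorff, open subgroups form a neighborhood basis of $1$, $U\backslash H/V$ finite for open $U,V$), every transitive $(G\times H)$-set (action with open stabilizers) is isomorphic to $X\times Y$ for a transitive $G$-set $X$ and a transitive $H$-set $Y$. *)

theory Defs
  imports "HOL-Algebra.Group" "HOL-Analysis.Analysis"
begin

definition topological_group :: "('g, 'm) monoid_scheme \<Rightarrow> 'g topology \<Rightarrow> bool" where
  "topological_group G T \<longleftrightarrow>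
     group G \<and> topspace T = carrier G \<and>
     continuous_map (prod_topology T T) T (\<lambda>p. fst p \<otimes>\<^bsub>G\<^esub> snd p) \<and>
     continuous_map T T (\<lambda>x. inv\<^bsub>G\<^esub> x)"

definition open_subgroup :: "('g, 'm) monoid_scheme \<Rightarrow> 'g topology \<Rightarrow> 'g set \<Rightarrow> bool" where
  "open_subgroup G T U \<longleftrightarrow> subgroup U G \<and> openin T U"

definition double_cosets :: "('g, 'm) monoid_scheme \<Rightarrow> 'g set \<Rightarrow> 'g set \<Rightarrow> 'g set set" where
  "double_cosets G U V =
     (\<lambda>g. {u \<otimes>\<^bsub>G\<^esub> g \<otimes>\<^bsub>G\<^esub> v | u v. u \<in> U \<and> v \<in> V}) ` carrier G"

definition pro_oligomorphic :: "('g, 'm) monoid_scheme \<Rightarrow> 'g topology \<Rightarrow> bool" where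
  "pro_oligomorphic G T \<longleftrightarrow>
     topological_group G T \<and> Hausdorff_space T \<and>
     (\<forall>W. openin T W \<and> \<one>\<^bsub>G\<^esub> \<in> W \<longrightarrow> (\<exists>U. open_subgroup G T U \<and> U \<subseteq> W)) \<and>
     (\<forall>U V. open_subgroup G T U \<and> open_subgroup G T V \<longrightarrow> finite (double_cosets G U V))"

definition is_action :: "('g, 'm) monoid_scheme \<Rightarrow> 'x set \<Rightarrow> ('g \<Rightarrow> 'x \<Rightarrow> 'x) \<Rightarrow> bool" where
  "is_action G E act \<longleftrightarrow>
     (\<forall>g \<in> carrier G. \<forall>x \<in> E. act g x \<in> E) \<and>
     (\<forall>x \<in> E. act \<one>\<^bsub>G\<^esub> x = x) \<and>
     (\<forall>g \<in> carrier G. \<forall>h \<in> carrier G. \<forall>x \<in> E. act (g \<otimes>\<^bsub>G\<^esub> h) x = act g (act h x))"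

text \<open>A G-set in the sense of the paper: an action with open stabilizers.\<close>
definition smooth_action :: "('g, 'm) monoid_scheme \<Rightarrow> 'g topology \<Rightarrow> 'x set \<Rightarrow> ('g \<Rightarrow> 'x \<Rightarrow> 'x) \<Rightarrow> bool" where
  "smooth_action G T E act \<longleftrightarrow>
     is_action G E act \<and> (\<forall>x \<in> E. openin T {g \<in> carrier G. act g x = x})"

definition transitive_action :: "('g, 'm) monoid_scheme \<Rightarrow> 'x set \<Rightarrow> ('g \<Rightarrow> 'x \<Rightarrow> 'x) \<Rightarrow> bool" where
  "transitive_action G E act \<longleftrightarrow>
     E \<noteq> {} \<and> (\<forall>x \<in> E. \<forall>y \<in> E. \<exists>g \<in> carrier G. act g x = y)"

definition transitive_G_set :: "('g, 'm) monoid_scheme \<Rightarrow> 'g topology \<Rightarrow> 'x set \<Rightarrow> ('g \<Rightarrow> 'x \<Rightarrow> 'x) \<Rightarrow> bool" where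
  "transitive_G_set G T E act \<longleftrightarrow> smooth_action G T E act \<and> transitive_action G E act"

definition G_set_iso :: "('g, 'm) monoid_scheme \<Rightarrow> 'x set \<Rightarrow> ('g \<Rightarrow> 'x \<Rightarrow> 'x)
      \<Rightarrow> 'y set \<Rightarrow> ('g \<Rightarrow> 'y \<Rightarrow> 'y) \<Rightarrow> bool" where
  "G_set_iso G E act E' act' \<longleftrightarrow>
     (\<exists>f. bij_betw f E E' \<and> (\<forall>g \<in> carrier G. \<forall>x \<in> E. f (act g x) = act' g (f x)))"

definition prod_action :: "('g \<Rightarrow> 'x \<Rightarrow> 'x) \<Rightarrow> ('h \<Rightarrow> 'y \<Rightarrow> 'y) \<Rightarrow> ('g \<times> 'h) \<Rightarrow> ('x \<times> 'y) \<Rightarrow> ('x \<times> 'y)" where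
  "prod_action a b = (\<lambda>(g, h) (x, y). (a g x, b h y))"

definition AutR :: "(real \<Rightarrow> real) monoid" where
  "AutR = \<lparr>carrier = {f. bij f \<and> strict_mono f}, monoid.mult = (\<circ>), one = id\<rparr>"

text \<open>Topology of pointwise convergence (discrete R): the open sets are those W such that
  every f in W has a basic neighbourhood f \<circ> Stab(A) = {g. g agrees with f on A}, A finite,
  contained in W.\<close>
definition AutR_open :: "(real \<Rightarrow> real) set \<Rightarrow> bool" where
  "AutR_open W \<longleftrightarrow> W \<subseteq> carrier AutR \<and>
     (\<forall>f \<in> W. \<exists>A. finite A \<and> {g \<in> carrier AutR. \<forall>a \<in> A. g a = f a} \<subseteq> W)"

lemma istopology_AutR_open: "istopology AutR_open"
  unfolding istopology_def
proof (intro conjI allI impI)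
  fix S T assume S: "AutR_open S" and T: "AutR_open T"
  show "AutR_open (S \<inter> T)"
    unfolding AutR_open_def
  proof (intro conjI ballI)
    show "S \<inter> T \<subseteq> carrier AutR" using S unfolding AutR_open_def by blast
    fix f assume f: "f \<in> S \<inter> T"
    obtain A where A: "finite A" "{g \<in> carrier AutR. \<forall>a \<in> A. g a = f a} \<subseteq> S"
      using S f unfolding AutR_open_def by blast
    obtain B where B: "finite B" "{g \<in> carrier AutR. \<forall>a \<in> B. g a = f a} \<subseteq> T"
      using T f unfolding AutR_open_def by blast
    show "\<exists>C. finite C \<and> {g \<in> carrier AutR. \<forall>a \<in> C. g a = f a} \<subseteq> S \<inter> T"
      by (rule exI[of _ "A \<union> B"]) (use A B in auto)
  qed
next
  fix K assume K: "\<forall>S\<in>K. AutR_open S"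
  show "AutR_open (\<Union>K)"
    unfolding AutR_open_def
  proof (intro conjI ballI)
    show "\<Union>K \<subseteq> carrier AutR" using K unfolding AutR_open_def by blast
    fix f assume "f \<in> \<Union>K"
    then obtain S where "S \<in> K" "f \<in> S" by blast
    then obtain A where "finite A" "{g \<in> carrier AutR. \<forall>a \<in> A. g a = f a} \<subseteq> S"
      using K unfolding AutR_open_def by blast
    then show "\<exists>A. finite A \<and> {g \<in> carrier AutR. \<forall>a \<in> A. g a = f a} \<subseteq> \<Union>K"
      using \<open>S \<in> K\<close> by blast
  qed
qed

definition AutR_top :: "(real \<Rightarrow> real) topology" where
  "AutR_top = topology AutR_open"

end

theory Submission
  imports Defs
begin

(* If (g, h) fixes a point z of a transitive (G x H)-set, conjugating by (g, h) shows that g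
   normalizes K = {k. (k, 1) fixes z}.  So if every open subgroup K of G is self-normalizing in the
   strong sense that p K p^-1 <= K forces p : K, then g : K, the stabilizer of z is the product of
   its G- and H-parts, and the set is the product of the G-orbit and the H-orbit of z.

   For G = Aut(R,<), an open subgroup K contains the pointwise stabilizer Stab A of a finite set A.
   Using piecewise-linear bumps, K contains Stab (A Int B) whenever it contains Stab A and Stab B.
   If p K p^-1 <= K and Stab C <= K, then Stab (p C) = p Stab C p^-1 <= K, hence Stab (C Int p C) <= K;
   shrinking C this way ends at a finite C with p C = C, which the order-preserving p fixes
   pointwise, so p : Stab C <= K. *)

section \<open>Transitive sets of a direct product\<close>

lemma is_action_inv_cancel:
  fixes G (structure)
  assumes "group G" "is_action G E act" "g \<in> carrier G" "x \<in> E"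
  shows "act (inv g) (act g x) = x"
proof -
  interpret group G by fact
  have "act (inv g \<otimes> g) x = act (inv g) (act g x)"
    using assms(2-4) inv_closed unfolding is_action_def by blast
  then show ?thesis
    using assms(2-4) by (simp add: is_action_def)
qed

lemma is_action_eq_iff:
  fixes G (structure)
  assumes "group G" "is_action G E act" "g \<in> carrier G" "k \<in> carrier G" "x \<in> E"
  shows "act g x = act k x \<longleftrightarrow> act (inv k \<otimes> g) x = x"
proof -
  interpret group G by fact
  have prod: "act (inv k \<otimes> g) x = act (inv k) (act g x)"
    using assms(2-5) by (simp add: is_action_def)
  have gx: "act g x \<in> E"
    using assms(2,3,5) by (simp add: is_action_def)
  show ?thesis
  proof
    assume "act g x = act k x"
    then show "act (inv k \<otimes> g) x = x"
      using prod is_action_inv_cancel[OF assms(1,2,4,5)] by simp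
  next
    assume "act (inv k \<otimes> g) x = x"
    then have "act k (act (inv k) (act g x)) = act k x" using prod by simp
    moreover have "act k (act (inv k) (act g x)) = act g x"
      using is_action_inv_cancel[OF assms(1,2) inv_closed[OF assms(4)] gx] assms(4) by simp
    ultimately show "act g x = act k x" by simp
  qed
qed

lemma subgroup_stabilizer:
  fixes G (structure)
  assumes "group G" "is_action G E act" "x \<in> E"
  shows "subgroup {g \<in> carrier G. act g x = x} G"
proof -
  interpret group G by fact
  show ?thesis
  proof (rule subgroupI)
    fix g assume "g \<in> {g \<in> carrier G. act g x = x}"
    then show "inv g \<in> {g \<in> carrier G. act g x = x}"
      using is_action_inv_cancel[OF assms(1,2) _ assms(3), of g] by simp
  next
    fix g k assume "g \<in> {g \<in> carrier G. act g x = x}" "k \<in> {g \<in> carrier G. act g x = x}"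
    then show "g \<otimes> k \<in> {g \<in> carrier G. act g x = x}"
      using assms(2,3) by (simp add: is_action_def)
  qed (use assms in \<open>auto simp: is_action_def\<close>)
qed

lemma smooth_action_pullback:
  assumes "smooth_action G T E act" "group_hom G' G \<phi>"
    and "continuous_map T' T \<phi>" "topspace T' = carrier G'"
  shows "smooth_action G' T' E (\<lambda>g. act (\<phi> g))"
proof -
  interpret group_hom G' G \<phi> by fact
  have "openin T' {g \<in> carrier G'. act (\<phi> g) x = x}" if "x \<in> E" for x
  proof -
    have "openin T {k \<in> carrier G. act k x = x}"
      using assms(1) that by (simp add: smooth_action_def)
    then have "openin T' {g \<in> topspace T'. \<phi> g \<in> {k \<in> carrier G. act k x = x}}"
      by (rule openin_continuous_map_preimage[OF assms(3)])
    moreover have "{g \<in> topspace T'. \<phi> g \<in> {k \<in> carrier G. act k x = x}} = {g \<in> carrier G'. act (\<phi> g) x = x}"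
      using assms(4) by auto
    ultimately show ?thesis by simp
  qed
  then show ?thesis
    using assms(1) by (auto simp: smooth_action_def is_action_def)
qed

lemma transitive_action_orbit:
  assumes "transitive_action G E act" "is_action G E act" "x \<in> E"
  shows "E = (\<lambda>g. act g x) ` carrier G"
proof
  show "E \<subseteq> (\<lambda>g. act g x) ` carrier G"
  proof
    fix y assume "y \<in> E"
    then obtain g where "g \<in> carrier G" "act g x = y"
      using assms(1,3) unfolding transitive_action_def by blast
    then show "y \<in> (\<lambda>g. act g x) ` carrier G" by blast
  qed
  show "(\<lambda>g. act g x) ` carrier G \<subseteq> E"
    using assms(2,3) unfolding is_action_def by blast
qed

lemma is_action_orbit:
  fixes G (structure)
  assumes "group G" "is_action G E act" "x \<in> E"
  shows "is_action G ((\<lambda>g. act g x) ` carrier G) act"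
proof -
  interpret group G by fact
  have "(\<lambda>g. act g x) ` carrier G \<subseteq> E"
    using assms(2,3) by (auto simp: is_action_def)
  moreover have "act g y \<in> (\<lambda>g. act g x) ` carrier G"
    if g: "g \<in> carrier G" and y: "y \<in> (\<lambda>g. act g x) ` carrier G" for g y
  proof -
    obtain k where "y = act k x" "k \<in> carrier G" using y by (rule imageE)
    then show ?thesis
      using assms(2,3) g by (intro image_eqI[of _ _ "g \<otimes> k"]) (simp_all add: is_action_def)
  qed
  ultimately show ?thesis
    using assms(2) unfolding is_action_def by blast
qed

lemma transitive_G_set_orbit:
  fixes G (structure)
  assumes "group G" "smooth_action G T E act" "x \<in> E"
  shows "transitive_G_set G T ((\<lambda>g. act g x) ` carrier G) act"
proof -
  interpret group G by fact
  let ?O = "(\<lambda>g. act g x) ` carrier G"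
  have act: "is_action G E act" using assms(2) by (simp add: smooth_action_def)
  have "\<exists>h\<in>carrier G. act h y = y'" if y: "y \<in> ?O" and y': "y' \<in> ?O" for y y'
  proof -
    obtain g where g: "y = act g x" "g \<in> carrier G" using y by (rule imageE)
    obtain k where k: "y' = act k x" "k \<in> carrier G" using y' by (rule imageE)
    have "act (k \<otimes> inv g) y = y'"
      using act assms(3) g k is_action_inv_cancel[OF assms(1) act g(2) assms(3)]
      by (simp add: is_action_def)
    then show ?thesis using g(2) k(2) by blast
  qed
  moreover have "?O \<subseteq> E"
    using act assms(3) by (auto simp: is_action_def)
  ultimately show ?thesis
    using assms(2) is_action_orbit[OF assms(1) act assms(3)]
    by (auto simp: transitive_G_set_def smooth_action_def transitive_action_def)
qed

lemma prod_action_apply [simp]: "prod_action a b (g, h) (x, y) = (a g x, b h y)"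
  by (simp add: prod_action_def)

lemma is_action_prod_action:
  assumes "is_action G X a" "is_action H Y b"
  shows "is_action (G \<times>\<times> H) (X \<times> Y) (prod_action a b)"
  using assms unfolding is_action_def by (intro conjI ballI; clarsimp)

lemma transitive_action_prod_action:
  assumes "transitive_action G X a" "transitive_action H Y b"
  shows "transitive_action (G \<times>\<times> H) (X \<times> Y) (prod_action a b)"
  unfolding transitive_action_def
proof (intro conjI ballI)
  show "X \<times> Y \<noteq> {}" using assms by (simp add: transitive_action_def)
next
  fix p q assume "p \<in> X \<times> Y" "q \<in> X \<times> Y"
  then obtain x y x' y' where xy: "p = (x, y)" "q = (x', y')" "x \<in> X" "y \<in> Y" "x' \<in> X" "y' \<in> Y"
    by blast
  obtain g where "g \<in> carrier G" "a g x = x'"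
    using assms(1) xy unfolding transitive_action_def by blast
  moreover obtain h where "h \<in> carrier H" "b h y = y'"
    using assms(2) xy unfolding transitive_action_def by blast
  ultimately show "\<exists>gh\<in>carrier (G \<times>\<times> H). prod_action a b gh p = q"
    using xy by (intro bexI[of _ "(g, h)"]) simp_all
qed

lemma smooth_action_DirProd_factors:
  assumes "smooth_action (G \<times>\<times> H) (prod_topology T S) Z act" "group G" "group H"
    and "topspace T = carrier G" "topspace S = carrier H"
  shows "smooth_action G T Z (\<lambda>g. act (g, \<one>\<^bsub>H\<^esub>))" "smooth_action H S Z (\<lambda>h. act (\<one>\<^bsub>G\<^esub>, h))"
proof -
  interpret G: group G by fact
  interpret H: group H by fact
  have "group_hom G (G \<times>\<times> H) (\<lambda>g. (g, \<one>\<^bsub>H\<^esub>))" "group_hom H (G \<times>\<times> H) (\<lambda>h. (\<one>\<^bsub>G\<^esub>, h))"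
    using DirProd_group[OF assms(2,3)] by (auto simp: group_hom_def group_hom_axioms_def hom_def)
  moreover have "continuous_map T (prod_topology T S) (\<lambda>g. (g, \<one>\<^bsub>H\<^esub>))"
    "continuous_map S (prod_topology T S) (\<lambda>h. (\<one>\<^bsub>G\<^esub>, h))"
    using assms(4,5) by (auto intro!: continuous_map_pairedI)
  ultimately show "smooth_action G T Z (\<lambda>g. act (g, \<one>\<^bsub>H\<^esub>))" "smooth_action H S Z (\<lambda>h. act (\<one>\<^bsub>G\<^esub>, h))"
    using assms(4,5) by (auto intro!: smooth_action_pullback[OF assms(1)])
qed

lemma G_set_iso_if_same_stabilizer:
  fixes G (structure)
  assumes "group G"
    and act: "is_action G E act" "transitive_action G E act" "x \<in> E"
    and act': "is_action G E' act'" "transitive_action G E' act'" "x' \<in> E'"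
    and stab: "\<And>g. g \<in> carrier G \<Longrightarrow> act g x = x \<longleftrightarrow> act' g x' = x'"
  shows "G_set_iso G E act E' act'"
proof -
  interpret group G by fact
  have same: "act g x = act k x \<longleftrightarrow> act' g x' = act' k x'" if "g \<in> carrier G" "k \<in> carrier G" for g k
    using is_action_eq_iff[OF \<open>group G\<close> act(1) that act(3)]
      is_action_eq_iff[OF \<open>group G\<close> act'(1) that act'(3)] stab that by simp
  have E: "E = (\<lambda>g. act g x) ` carrier G"
    by (rule transitive_action_orbit[OF act(2,1,3)])
  have E': "E' = (\<lambda>g. act' g x') ` carrier G"
    by (rule transitive_action_orbit[OF act'(2,1,3)])
  define f where "f z = act' (SOME g. g \<in> carrier G \<and> act g x = z) x'" for z
  have f: "f (act g x) = act' g x'" if "g \<in> carrier G" for g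
  proof -
    let ?k = "SOME k. k \<in> carrier G \<and> act k x = act g x"
    have "?k \<in> carrier G \<and> act ?k x = act g x"
      by (rule someI[where P = "\<lambda>k. k \<in> carrier G \<and> act k x = act g x" and x = g]) (simp add: that)
    then show ?thesis using same[of ?k g] that by (simp add: f_def)
  qed
  have "inj_on f E"
  proof (rule inj_onI)
    fix y y' assume "y \<in> E" "y' \<in> E" "f y = f y'"
    obtain g where g: "y = act g x" "g \<in> carrier G" using \<open>y \<in> E\<close> unfolding E by (rule imageE)
    obtain k where k: "y' = act k x" "k \<in> carrier G" using \<open>y' \<in> E\<close> unfolding E by (rule imageE)
    show "y = y'" using \<open>f y = f y'\<close> f same g k by simp
  qed
  moreover have "f ` E = E'"
  proof -
    have "f ` E = (\<lambda>g. f (act g x)) ` carrier G" unfolding E by (simp add: image_image)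
    also have "\<dots> = E'" unfolding E' using f by (intro image_cong) simp_all
    finally show ?thesis .
  qed
  moreover have "f (act g y) = act' g (f y)" if "g \<in> carrier G" "y \<in> E" for g y
  proof -
    obtain k where k: "y = act k x" "k \<in> carrier G" using \<open>y \<in> E\<close> unfolding E by (rule imageE)
    then have "act g y = act (g \<otimes> k) x" "act' g (act' k x') = act' (g \<otimes> k) x'"
      using act(1,3) act'(1,3) \<open>g \<in> carrier G\<close> by (simp_all add: is_action_def)
    then show ?thesis using f k \<open>g \<in> carrier G\<close> by simp
  qed
  ultimately show ?thesis
    unfolding G_set_iso_def bij_betw_def by blast
qed

(* Stronger than the usual N(K) = K: only p K p^-1 <= K is assumed. *)
definition self_normalizing :: "('g, 'm) monoid_scheme \<Rightarrow> 'g set \<Rightarrow> bool" where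
  "self_normalizing G K \<longleftrightarrow>
     (\<forall>p \<in> carrier G. (\<forall>k \<in> K. p \<otimes>\<^bsub>G\<^esub> k \<otimes>\<^bsub>G\<^esub> inv\<^bsub>G\<^esub> p \<in> K) \<longrightarrow> p \<in> K)"

lemma DirProd_stabilizer_conj:
  assumes "group G" "group H" "is_action (G \<times>\<times> H) Z act" "z \<in> Z"
    and "g \<in> carrier G" "h \<in> carrier H" "act (g, h) z = z"
    and "k \<in> carrier G" "act (k, \<one>\<^bsub>H\<^esub>) z = z"
  shows "act (g \<otimes>\<^bsub>G\<^esub> k \<otimes>\<^bsub>G\<^esub> inv\<^bsub>G\<^esub> g, \<one>\<^bsub>H\<^esub>) z = z"
proof -
  interpret G: group G by fact
  interpret H: group H by fact
  have S: "subgroup {x \<in> carrier (G \<times>\<times> H). act x z = z} (G \<times>\<times> H)"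
    using assms(3,4) by (intro subgroup_stabilizer DirProd_group assms(1,2))
  have "(g, h) \<otimes>\<^bsub>G \<times>\<times> H\<^esub> (k, \<one>\<^bsub>H\<^esub>) \<otimes>\<^bsub>G \<times>\<times> H\<^esub> inv\<^bsub>G \<times>\<times> H\<^esub> (g, h)
      \<in> {x \<in> carrier (G \<times>\<times> H). act x z = z}"
    using assms(5-9) by (intro subgroup.m_closed[OF S] subgroup.m_inv_closed[OF S]) auto
  moreover have "(g, h) \<otimes>\<^bsub>G \<times>\<times> H\<^esub> (k, \<one>\<^bsub>H\<^esub>) \<otimes>\<^bsub>G \<times>\<times> H\<^esub> inv\<^bsub>G \<times>\<times> H\<^esub> (g, h)
      = (g \<otimes>\<^bsub>G\<^esub> k \<otimes>\<^bsub>G\<^esub> inv\<^bsub>G\<^esub> g, \<one>\<^bsub>H\<^esub>)"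
    using assms(1,2,5,6,8) by (simp add: inv_DirProd)
  ultimately show ?thesis by simp
qed

lemma DirProd_stabilizer_split:
  assumes "group G" "group H" "is_action (G \<times>\<times> H) Z act" "z \<in> Z"
    and self_norm: "self_normalizing G {k \<in> carrier G. act (k, \<one>\<^bsub>H\<^esub>) z = z}"
    and gh: "g \<in> carrier G" "h \<in> carrier H"
  shows "act (g, h) z = z \<longleftrightarrow> act (g, \<one>\<^bsub>H\<^esub>) z = z \<and> act (\<one>\<^bsub>G\<^esub>, h) z = z"
proof -
  interpret G: group G by fact
  interpret H: group H by fact
  have "act (x \<otimes>\<^bsub>G \<times>\<times> H\<^esub> y) w = act x (act y w)"
    if "x \<in> carrier (G \<times>\<times> H)" "y \<in> carrier (G \<times>\<times> H)" "w \<in> Z" for x y w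
    using assms(3) that unfolding is_action_def by blast
  from this[of "(g, \<one>\<^bsub>H\<^esub>)" "(\<one>\<^bsub>G\<^esub>, h)" z]
  have mult: "act (g, h) z = act (g, \<one>\<^bsub>H\<^esub>) (act (\<one>\<^bsub>G\<^esub>, h) z)"
    using gh assms(4) by simp
  show ?thesis
  proof
    assume gh_fix: "act (g, h) z = z"
    then have g_fix: "act (g, \<one>\<^bsub>H\<^esub>) z = z"
      using self_norm gh DirProd_stabilizer_conj[OF assms(1-4) gh gh_fix]
      unfolding self_normalizing_def by blast
    have "act (\<one>\<^bsub>G\<^esub>, h) z \<in> Z"
      using assms(3,4) gh unfolding is_action_def by simp
    then have "act (inv\<^bsub>G \<times>\<times> H\<^esub> (g, \<one>\<^bsub>H\<^esub>)) (act (g, \<one>\<^bsub>H\<^esub>) (act (\<one>\<^bsub>G\<^esub>, h) z))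
        = act (\<one>\<^bsub>G\<^esub>, h) z"
      using is_action_inv_cancel[OF DirProd_group[OF assms(1,2)] assms(3), of "(g, \<one>\<^bsub>H\<^esub>)"] gh
      by simp
    moreover have "act (inv\<^bsub>G \<times>\<times> H\<^esub> (g, \<one>\<^bsub>H\<^esub>)) (act (g, \<one>\<^bsub>H\<^esub>) z) = z"
      using is_action_inv_cancel[OF DirProd_group[OF assms(1,2)] assms(3), of "(g, \<one>\<^bsub>H\<^esub>)" z] gh assms(4)
      by simp
    ultimately show "act (g, \<one>\<^bsub>H\<^esub>) z = z \<and> act (\<one>\<^bsub>G\<^esub>, h) z = z"
      using g_fix gh_fix mult by simp
  qed (use mult in simp)
qed

theorem transitive_G_set_DirProd_splits:
  fixes Z :: "'z set"
  assumes G: "group G" "topspace T = carrier G"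
    and self_norm: "\<And>K. subgroup K G \<Longrightarrow> openin T K \<Longrightarrow> self_normalizing G K"
    and H: "group H" "topspace S = carrier H"
    and Z: "transitive_G_set (G \<times>\<times> H) (prod_topology T S) Z act"
  shows "\<exists>(X :: 'z set) a (Y :: 'z set) b. transitive_G_set G T X a \<and> transitive_G_set H S Y b \<and>
           G_set_iso (G \<times>\<times> H) Z act (X \<times> Y) (prod_action a b)"
proof -
  interpret G: group G by (fact G(1))
  interpret H: group H by (fact H(1))
  have smooth: "smooth_action (G \<times>\<times> H) (prod_topology T S) Z act"
    and trans: "transitive_action (G \<times>\<times> H) Z act"
    using Z by (simp_all add: transitive_G_set_def)
  define a where "a g = act (g, \<one>\<^bsub>H\<^esub>)" for g
  define b where "b h = act (\<one>\<^bsub>G\<^esub>, h)" for h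
  have smooth_a: "smooth_action G T Z a" and smooth_b: "smooth_action H S Z b"
    unfolding a_def[abs_def] b_def[abs_def]
    by (rule smooth_action_DirProd_factors[OF smooth G(1) H(1) G(2) H(2)])+
  obtain z where z: "z \<in> Z" using trans by (auto simp: transitive_action_def)
  define X where "X = (\<lambda>g. a g z) ` carrier G"
  define Y where "Y = (\<lambda>h. b h z) ` carrier H"
  have X: "transitive_G_set G T X a" and Y: "transitive_G_set H S Y b"
    unfolding X_def Y_def
    by (intro transitive_G_set_orbit[OF G(1) smooth_a z] transitive_G_set_orbit[OF H(1) smooth_b z])+
  have "self_normalizing G {g \<in> carrier G. a g z = z}"
    using self_norm subgroup_stabilizer[OF G(1) _ z] smooth_a z by (simp add: smooth_action_def)
  then have stab: "act (g, h) z = z \<longleftrightarrow> a g z = z \<and> b h z = z"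
    if "g \<in> carrier G" "h \<in> carrier H" for g h
    using DirProd_stabilizer_split[OF G(1) H(1) _ z _ that] smooth by (simp add: smooth_action_def a_def b_def)
  have "a \<one>\<^bsub>G\<^esub> z = z" "b \<one>\<^bsub>H\<^esub> z = z"
    using smooth z by (simp_all add: smooth_action_def is_action_def a_def b_def)
  then have "z \<in> X" "z \<in> Y"
    unfolding X_def Y_def using G.one_closed H.one_closed by (metis image_eqI)+
  then have "G_set_iso (G \<times>\<times> H) Z act (X \<times> Y) (prod_action a b)"
    using X Y smooth trans z stab
    by (intro G_set_iso_if_same_stabilizer[OF DirProd_group[OF G(1) H(1)], of _ _ z _ _ "(z, z)"]
        is_action_prod_action transitive_action_prod_action)
      (auto simp: transitive_G_set_def smooth_action_def)
  then show ?thesis using X Y by blast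
qed

section \<open>Open subgroups of Aut(R,<)\<close>

lemma carrier_AutR: "carrier AutR = {f. bij f \<and> strict_mono f}"
  by (simp add: AutR_def)

lemma one_AutR [simp]: "\<one>\<^bsub>AutR\<^esub> = id"
  and mult_AutR [simp]: "f \<otimes>\<^bsub>AutR\<^esub> g = f \<circ> g"
  by (simp_all add: AutR_def)

lemma inv_into_in_AutR:
  assumes "f \<in> carrier AutR" shows "inv_into UNIV f \<in> carrier AutR"
proof -
  have f: "bij f" "strict_mono f" using assms by (simp_all add: carrier_AutR)
  have "strict_mono (inv_into UNIV f)"
    using f(2) bij_is_surj[OF f(1)] by (rule strict_mono_inv) (simp add: bij_is_inj f(1))
  then show ?thesis using bij_imp_bij_inv[OF f(1)] by (simp add: carrier_AutR)
qed

lemma group_AutR: "group AutR"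
proof (rule groupI)
  fix f g assume "f \<in> carrier AutR" "g \<in> carrier AutR"
  then show "f \<otimes>\<^bsub>AutR\<^esub> g \<in> carrier AutR"
    by (auto simp: carrier_AutR bij_comp strict_mono_def)
next
  fix f assume "f \<in> carrier AutR"
  then show "\<exists>g\<in>carrier AutR. g \<otimes>\<^bsub>AutR\<^esub> f = \<one>\<^bsub>AutR\<^esub>"
    using inv_into_in_AutR[of f] by (auto simp: carrier_AutR bij_is_inj intro: bexI[of _ "inv_into UNIV f"])
qed (auto simp: carrier_AutR strict_mono_def o_assoc)

lemma inv_AutR [simp]:
  assumes "f \<in> carrier AutR" shows "inv\<^bsub>AutR\<^esub> f = inv_into UNIV f"
proof (rule group.inv_equality[OF group_AutR])
  show "inv_into UNIV f \<otimes>\<^bsub>AutR\<^esub> f = \<one>\<^bsub>AutR\<^esub>"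
    using assms by (simp add: carrier_AutR bij_is_inj)
qed (simp_all add: assms inv_into_in_AutR)

lemma comp_in_AutR: "f \<in> carrier AutR \<Longrightarrow> g \<in> carrier AutR \<Longrightarrow> f \<circ> g \<in> carrier AutR"
  using group.subgroup_self[OF group_AutR] subgroup.m_closed by fastforce

lemma AutR_inv_cancel [simp]:
  assumes "f \<in> carrier AutR"
  shows "inv_into UNIV f (f x) = x" "f (inv_into UNIV f x) = x"
  using assms by (simp_all add: carrier_AutR bij_is_inj bij_is_surj surj_f_inv_f)

lemma subgroup_AutR_comp_closed:
  "subgroup K AutR \<Longrightarrow> f \<in> K \<Longrightarrow> g \<in> K \<Longrightarrow> f \<circ> g \<in> K"
  using subgroup.m_closed by fastforce

lemma subgroup_AutR_inv_closed:
  "subgroup K AutR \<Longrightarrow> f \<in> K \<Longrightarrow> inv_into UNIV f \<in> K"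
  using subgroup.m_inv_closed subgroup.mem_carrier inv_AutR by metis

lemma openin_AutR_top: "openin AutR_top K \<longleftrightarrow> AutR_open K"
  by (simp add: AutR_top_def istopology_AutR_open)

lemma topspace_AutR_top: "topspace AutR_top = carrier AutR"
  by (auto simp: topspace_def openin_AutR_top AutR_open_def intro: exI[of _ "carrier AutR"])

definition pointwise_stabilizer :: "real set \<Rightarrow> (real \<Rightarrow> real) set" where
  "pointwise_stabilizer A = {g \<in> carrier AutR. \<forall>a\<in>A. g a = a}"

lemma open_subgroup_contains_pointwise_stabilizer:
  assumes "openin AutR_top K" "id \<in> K"
  obtains A where "finite A" "pointwise_stabilizer A \<subseteq> K"
  using assms by (force simp: openin_AutR_top AutR_open_def pointwise_stabilizer_def)

definition affine_through :: "real \<Rightarrow> real \<Rightarrow> real \<Rightarrow> real \<Rightarrow> real \<Rightarrow> real" where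
  "affine_through a b c d t = c + (t - a) * ((d - c) / (b - a))"

lemma affine_through_start [simp]: "affine_through a b c d a = c"
  and affine_through_end [simp]: "a \<noteq> b \<Longrightarrow> affine_through a b c d b = d"
  by (simp_all add: affine_through_def)

lemma strict_mono_affine_through:
  assumes "a < b" "c < d" shows "strict_mono (affine_through a b c d)"
proof (rule strict_monoI)
  fix s t :: real assume "s < t"
  then have "(s - a) * ((d - c) / (b - a)) < (t - a) * ((d - c) / (b - a))"
    using assms by (intro mult_strict_right_mono) simp_all
  then show "affine_through a b c d s < affine_through a b c d t"
    by (simp add: affine_through_def)
qed

lemma affine_through_inverse:
  assumes "a < b" "c < d"
  shows "affine_through c d a b (affine_through a b c d t) = t"
proof -
  have "(d - c) / (b - a) * ((b - a) / (d - c)) = 1" using assms by simp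
  then show ?thesis using assms by (simp add: affine_through_def mult.assoc)
qed

lemma strict_mono_if_le:
  fixes f g :: "'a::linorder \<Rightarrow> 'b::linorder"
  assumes "strict_mono f" "strict_mono g" "f c = g c"
  shows "strict_mono (\<lambda>t. if t \<le> c then f t else g t)"
proof (rule strict_monoI)
  fix s t :: 'a assume "s < t"
  consider "t \<le> c" | "c < s" | "s \<le> c" "c < t" by fastforce
  then show "(if s \<le> c then f s else g s) < (if t \<le> c then f t else g t)"
  proof cases
    case 3
    then have "f s \<le> f c" "g c < g t"
      using assms(1,2) by (simp_all add: strict_mono_less_eq strict_mono_less)
    then show ?thesis using 3 assms(3) by (simp add: order.strict_trans1)
  qed (use \<open>s < t\<close> assms(1,2) in \<open>auto simp: strict_mono_less\<close>)
qed

definition bump :: "real \<Rightarrow> real \<Rightarrow> real \<Rightarrow> real \<Rightarrow> real \<Rightarrow> real" where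
  "bump l x x' r t =
     (if t \<le> x then (if t \<le> l then t else affine_through l x l x' t)
      else (if t \<le> r then affine_through x r x' r t else t))"

lemma bump_apply: "l < x \<Longrightarrow> x \<le> r \<Longrightarrow> bump l x x' r x = x'"
  by (simp add: bump_def)

lemma bump_fixes_outside: "l < x \<Longrightarrow> x < r \<Longrightarrow> t \<le> l \<or> r \<le> t \<Longrightarrow> bump l x x' r t = t"
  by (auto simp: bump_def)

lemma bump_inverse:
  assumes "l < x" "x < r" "l < x'" "x' < r"
  shows "bump l x' x r (bump l x x' r t) = t"
proof -
  have mono1: "strict_mono (affine_through l x l x')" and mono2: "strict_mono (affine_through x r x' r)"
    using assms by (simp_all add: strict_mono_affine_through)
  consider "t \<le> l" | "l < t" "t \<le> x" | "x < t" "t \<le> r" | "r < t" by fastforce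
  then show ?thesis
  proof cases
    case 2
    have "l < affine_through l x l x' t" "affine_through l x l x' t \<le> x'"
      using strict_monoD[OF mono1 \<open>l < t\<close>] strict_mono_less_eq[OF mono1, of t x] 2 assms
      by simp_all
    then show ?thesis
      using 2 assms by (simp add: bump_def affine_through_inverse)
  next
    case 3
    have "x' < affine_through x r x' r t" "affine_through x r x' r t \<le> r"
      using strict_monoD[OF mono2 \<open>x < t\<close>] strict_mono_less_eq[OF mono2, of t r] 3 assms
      by simp_all
    then show ?thesis
      using 3 assms by (simp add: bump_def affine_through_inverse)
  qed (use assms in \<open>auto simp: bump_def\<close>)
qed

lemma bump_in_AutR:
  assumes "l < x" "x < r" "l < x'" "x' < r"
  shows "bump l x x' r \<in> carrier AutR"
proof -
  have left: "strict_mono (\<lambda>t. if t \<le> l then t else affine_through l x l x' t)"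
    using assms by (intro strict_mono_if_le strict_mono_affine_through) (simp_all add: strict_mono_def)
  have right: "strict_mono (\<lambda>t. if t \<le> r then affine_through x r x' r t else t)"
    using assms by (intro strict_mono_if_le strict_mono_affine_through) (simp_all add: strict_mono_def)
  have "strict_mono (bump l x x' r)"
    unfolding bump_def[abs_def] by (rule strict_mono_if_le[OF left right]) (use assms in simp)
  moreover have "bij (bump l x x' r)"
    using bump_inverse[OF assms] bump_inverse[of l x' r x] assms
    by (intro o_bij[of "bump l x' x r"]) (auto simp: fun_eq_iff)
  ultimately show ?thesis by (simp add: carrier_AutR)
qed

lemma finite_gap_above:
  fixes F :: "real set"
  assumes "finite F"
  obtains r where "y < r" "\<And>f. f \<in> F \<Longrightarrow> y < f \<Longrightarrow> r < f"
proof -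
  define m where "m = Min (insert (y + 1) {f \<in> F. y < f})"
  have "y < m" using assms by (simp add: m_def)
  moreover have "m \<le> f" if "f \<in> F" "y < f" for f
    using assms that by (simp add: m_def)
  ultimately show ?thesis
    by (intro that[of "(y + m) / 2"]) fastforce+
qed

lemma finite_gap_below:
  fixes F :: "real set"
  assumes "finite F"
  obtains l where "l < y" "\<And>f. f \<in> F \<Longrightarrow> f < y \<Longrightarrow> f < l"
proof -
  obtain r where "- y < r" "\<And>f. f \<in> uminus ` F \<Longrightarrow> - y < f \<Longrightarrow> r < f"
    using finite_gap_above[of "uminus ` F" "- y"] assms by blast
  then show ?thesis
    by (intro that[of "- r"]) force+
qed

lemma pointwise_stabilizer_moves_point:
  assumes "finite F" "b \<le> y" "\<And>f. f \<in> F \<Longrightarrow> f < b \<or> y < f"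
  obtains h where "h \<in> pointwise_stabilizer F" "h b = y"
proof -
  obtain l where l: "l < b" "\<And>f. f \<in> F \<Longrightarrow> f < b \<Longrightarrow> f < l"
    using finite_gap_below[OF assms(1)] by blast
  obtain r where r: "y < r" "\<And>f. f \<in> F \<Longrightarrow> y < f \<Longrightarrow> r < f"
    using finite_gap_above[OF assms(1)] by blast
  have lbyr: "l < b" "b < r" "l < y" "y < r"
    using l r assms(2) by linarith+
  have "bump l b y r f = f" if "f \<in> F" for f
    using assms(3)[OF that] l(2)[OF that] r(2)[OF that] lbyr
    by (intro bump_fixes_outside) fastforce+
  then show ?thesis
    using bump_in_AutR[OF lbyr] bump_apply[of l b r y] lbyr
    by (intro that[of "bump l b y r"]) (auto simp: pointwise_stabilizer_def)
qed

lemma pointwise_stabilizer_image: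
  assumes "p \<in> carrier AutR"
  shows "pointwise_stabilizer (p ` C) = (\<lambda>k. p \<circ> k \<circ> inv_into UNIV p) ` pointwise_stabilizer C"
proof
  show "pointwise_stabilizer (p ` C) \<subseteq> (\<lambda>k. p \<circ> k \<circ> inv_into UNIV p) ` pointwise_stabilizer C"
  proof
    fix f assume f: "f \<in> pointwise_stabilizer (p ` C)"
    let ?k = "inv_into UNIV p \<circ> f \<circ> p"
    have "?k \<in> pointwise_stabilizer C"
      using f assms by (auto simp: pointwise_stabilizer_def comp_in_AutR inv_into_in_AutR)
    moreover have "f = p \<circ> ?k \<circ> inv_into UNIV p"
      using assms by (simp add: fun_eq_iff)
    ultimately show "f \<in> (\<lambda>k. p \<circ> k \<circ> inv_into UNIV p) ` pointwise_stabilizer C"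
      by blast
  qed
qed (use assms in \<open>auto simp: pointwise_stabilizer_def comp_in_AutR inv_into_in_AutR\<close>)

lemma pointwise_stabilizer_image_subset:
  assumes "subgroup K AutR" "p \<in> carrier AutR" "\<And>k. k \<in> K \<Longrightarrow> p \<circ> k \<circ> inv_into UNIV p \<in> K"
    and "pointwise_stabilizer C \<subseteq> K"
  shows "pointwise_stabilizer (p ` C) \<subseteq> K"
  using assms pointwise_stabilizer_image[OF assms(2)] by auto

lemma pointwise_stabilizer_push_off:
  assumes "finite A" "finite B" "b \<in> B" "b \<notin> A" "b < y" "\<And>c. c \<in> B \<Longrightarrow> c \<le> b \<or> y < c"
  obtains u where "u \<in> pointwise_stabilizer B" "\<And>a. a \<in> A \<Longrightarrow> u a < b \<or> y < u a"
proof -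
  obtain x' where x': "y < x'" "\<And>c. c \<in> B \<Longrightarrow> y < c \<Longrightarrow> x' < c"
    using finite_gap_above[OF assms(2)] by blast
  define m where "m = Min (insert x' {a \<in> A. b < a})"
  have m: "b < m" "m \<le> x'" "\<And>a. a \<in> A \<Longrightarrow> b < a \<Longrightarrow> m \<le> a"
    using assms(1,5) x'(1) by (auto simp: m_def)
  have "c < m \<or> x' < c" if "c \<in> B" for c
    using assms(6)[OF that] x'(2)[OF that] m(1) by fastforce
  then obtain u where u: "u \<in> pointwise_stabilizer B" "u m = x'"
    using pointwise_stabilizer_moves_point[OF assms(2) m(2)] by blast
  have mono: "strict_mono u" using u(1) by (simp add: pointwise_stabilizer_def carrier_AutR)
  have "u a < b \<or> y < u a" if "a \<in> A" for a
  proof (cases "a < b")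
    case True
    then have "u a < u b" using mono by (simp add: strict_mono_less)
    then show ?thesis using u(1) assms(3) by (simp add: pointwise_stabilizer_def)
  next
    case False
    then have "m \<le> a" using m(3) that assms(4) by fastforce
    then have "x' \<le> u a" using mono u(2) by (metis strict_mono_less_eq)
    then show ?thesis using x'(1) by simp
  qed
  then show ?thesis using u(1) that by blast
qed

lemma subgroup_AutR_mem_if_agrees_on:
  assumes K: "subgroup K AutR" and SB: "pointwise_stabilizer B \<subseteq> K"
    and "h \<in> K" "g \<in> carrier AutR" "\<And>c. c \<in> B \<Longrightarrow> g c = h c"
  shows "g \<in> K"
proof -
  have hG: "h \<in> carrier AutR" using subgroup.mem_carrier[OF K \<open>h \<in> K\<close>] .
  then have "inv_into UNIV h \<circ> g \<in> pointwise_stabilizer B"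
    using assms(4,5) by (simp add: pointwise_stabilizer_def comp_in_AutR inv_into_in_AutR)
  then have "h \<circ> (inv_into UNIV h \<circ> g) \<in> K"
    using SB \<open>h \<in> K\<close> K by (auto intro: subgroup_AutR_comp_closed)
  then show ?thesis using hG by (simp add: fun_eq_iff comp_def)
qed

lemma pointwise_stabilizer_remove_point_right:
  assumes K: "subgroup K AutR" and fin: "finite A" "finite B"
    and SA: "pointwise_stabilizer A \<subseteq> K" and SB: "pointwise_stabilizer B \<subseteq> K"
    and b: "b \<in> B" "b \<notin> A"
    and g: "g \<in> pointwise_stabilizer (B - {b})" "b < g b"
  shows "g \<in> K"
proof -
  have gG: "g \<in> carrier AutR" and gfix: "\<And>c. c \<in> B - {b} \<Longrightarrow> g c = c"
    using g(1) by (auto simp: pointwise_stabilizer_def)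
  have outside: "c < b \<or> g b < c" if "c \<in> B - {b}" for c
  proof (cases "c < b")
    case False
    then have "g b < g c"
      using that gG by (simp add: carrier_AutR strict_mono_less)
    then show ?thesis using gfix[OF that] by simp
  qed simp
  \<comment> \<open>Some \<open>u \<in> Stab B \<subseteq> K\<close> moves \<open>A\<close> off \<open>[b, g b]\<close>; a bump fixing \<open>u ` A \<union> (B - {b})\<close>
    and sending \<open>b\<close> to \<open>g b\<close> then lies in \<open>Stab (u ` A) = u Stab A u\<inverse> \<subseteq> K\<close> and agrees
    with \<open>g\<close> on \<open>B\<close>.\<close>
  have "c \<le> b \<or> g b < c" if "c \<in> B" for c
    using outside[of c] that by (cases "c = b") auto
  then obtain u where u: "u \<in> pointwise_stabilizer B" "\<And>a. a \<in> A \<Longrightarrow> u a < b \<or> g b < u a"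
    using pointwise_stabilizer_push_off[OF fin b g(2)] by blast
  have "pointwise_stabilizer (u ` A) \<subseteq> K"
    using u(1) SB SA K by (intro pointwise_stabilizer_image_subset)
      (auto simp: pointwise_stabilizer_def subgroup_AutR_comp_closed subgroup_AutR_inv_closed)
  moreover have "f < b \<or> g b < f" if "f \<in> u ` A \<union> (B - {b})" for f
    using that u(2) outside by blast
  then obtain h where h: "h \<in> pointwise_stabilizer (u ` A \<union> (B - {b}))" "h b = g b"
    using pointwise_stabilizer_moves_point[of "u ` A \<union> (B - {b})" b "g b"] fin g(2) by auto
  ultimately have "h \<in> K"
    by (auto simp: pointwise_stabilizer_def)
  moreover have "g c = h c" if "c \<in> B" for c
    using that h gfix by (cases "c = b") (auto simp: pointwise_stabilizer_def)
  ultimately show ?thesis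
    using subgroup_AutR_mem_if_agrees_on[OF K SB _ gG] by blast
qed

lemma pointwise_stabilizer_remove_point:
  assumes K: "subgroup K AutR" and fin: "finite A" "finite B"
    and SA: "pointwise_stabilizer A \<subseteq> K" and SB: "pointwise_stabilizer B \<subseteq> K"
    and b: "b \<in> B" "b \<notin> A"
  shows "pointwise_stabilizer (B - {b}) \<subseteq> K"
proof
  fix g assume g: "g \<in> pointwise_stabilizer (B - {b})"
  then have gG: "g \<in> carrier AutR" by (simp add: pointwise_stabilizer_def)
  note right = pointwise_stabilizer_remove_point_right[OF assms]
  consider "g b = b" | "b < g b" | "g b < b" by fastforce
  then show "g \<in> K"
  proof cases
    case 1
    then have "g \<in> pointwise_stabilizer B" using g by (auto simp: pointwise_stabilizer_def)
    then show ?thesis using SB by blast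
  next
    case 2
    then show ?thesis using right g by blast
  next
    case 3
    let ?g' = "inv_into UNIV g"
    have "?g' c = c" if "c \<in> B - {b}" for c
      using g that AutR_inv_cancel(1)[OF gG, of c] by (simp add: pointwise_stabilizer_def)
    then have "?g' \<in> pointwise_stabilizer (B - {b})"
      using inv_into_in_AutR[OF gG] by (simp add: pointwise_stabilizer_def)
    moreover have "b < ?g' b"
      using 3 strict_mono_less[of ?g' "g b" b] inv_into_in_AutR[OF gG] gG by (simp add: carrier_AutR)
    ultimately have "inv_into UNIV ?g' \<in> K"
      using right K subgroup_AutR_inv_closed by blast
    then show ?thesis using gG by (simp add: carrier_AutR inv_inv_eq)
  qed
qed

lemma pointwise_stabilizer_Int:
  assumes K: "subgroup K AutR" and fin: "finite A" "finite B"
    and SA: "pointwise_stabilizer A \<subseteq> K" and SB: "pointwise_stabilizer B \<subseteq> K"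
  shows "pointwise_stabilizer (A \<inter> B) \<subseteq> K"
proof -
  have remove: "pointwise_stabilizer (A \<inter> B) \<subseteq> K"
    if "finite D" "D \<inter> A = {}" "pointwise_stabilizer (A \<inter> B \<union> D) \<subseteq> K" for D
    using that
  proof (induction D rule: finite_induct)
    case (insert d D)
    have "pointwise_stabilizer ((A \<inter> B \<union> insert d D) - {d}) \<subseteq> K"
      using insert.hyps(1) insert.prems fin
      by (intro pointwise_stabilizer_remove_point[OF K _ _ SA]) auto
    moreover have "(A \<inter> B \<union> insert d D) - {d} = A \<inter> B \<union> D"
      using insert.hyps(2) insert.prems(1) by blast
    ultimately show ?case using insert.IH insert.prems(1) by simp
  qed simp
  have "A \<inter> B \<union> (B - A) = B" by blast
  then show ?thesis using remove[of "B - A"] fin(2) SB by auto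
qed

lemma strict_mono_fixes_invariant_finite_set:
  fixes p :: "'a::linorder \<Rightarrow> 'a"
  assumes "strict_mono p" "finite C" "p ` C = C" "c \<in> C"
  shows "p c = c"
proof -
  have rank: "p ` {x \<in> C. x < c} = {x \<in> C. x < p c}"
  proof
    show "p ` {x \<in> C. x < c} \<subseteq> {x \<in> C. x < p c}"
      using assms(1,3) by (auto simp: strict_mono_less)
    show "{x \<in> C. x < p c} \<subseteq> p ` {x \<in> C. x < c}"
    proof
      fix y assume y: "y \<in> {x \<in> C. x < p c}"
      then obtain x where "x \<in> C" "y = p x" using assms(3) by blast
      then show "y \<in> p ` {x \<in> C. x < c}" using y assms(1) by (auto simp: strict_mono_less)
    qed
  qed
  then have card_eq: "card {x \<in> C. x < c} = card {x \<in> C. x < p c}"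
    using card_image[OF strict_mono_imp_inj_on[OF assms(1)]] by metis
  have "p c \<in> C" using assms(3,4) by blast
  show ?thesis
  proof (rule ccontr)
    assume "p c \<noteq> c"
    then consider "c < p c" | "p c < c" by fastforce
    then show False
    proof cases
      case 1
      then have "{x \<in> C. x < c} \<subset> {x \<in> C. x < p c}" using assms(4) by auto
      then have "card {x \<in> C. x < c} < card {x \<in> C. x < p c}"
        using assms(2) by (intro psubset_card_mono) simp_all
      then show False using card_eq by simp
    next
      case 2
      then have "{x \<in> C. x < p c} \<subset> {x \<in> C. x < c}" using \<open>p c \<in> C\<close> by auto
      then have "card {x \<in> C. x < p c} < card {x \<in> C. x < c}"
        using assms(2) by (intro psubset_card_mono) simp_all
      then show False using card_eq by simp
    qed
  qed
qed

lemma normalizing_element_in_subgroup_AutR: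
  assumes K: "subgroup K AutR" and p: "p \<in> carrier AutR"
    and conj: "\<And>k. k \<in> K \<Longrightarrow> p \<circ> k \<circ> inv_into UNIV p \<in> K"
    and "finite C" "pointwise_stabilizer C \<subseteq> K"
  shows "p \<in> K"
  using assms(4,5)
proof (induction C rule: finite_psubset_induct)
  case (psubset C)
  show ?case
  proof (cases "C \<subseteq> p ` C")
    case True
    have "inj p" using p by (simp add: carrier_AutR bij_is_inj)
    then have "p ` C = C"
      using True psubset.hyps(1) by (metis card_image card_subset_eq finite_imageI inj_on_subset subset_UNIV)
    then have "p \<in> pointwise_stabilizer C"
      using p psubset.hyps(1) strict_mono_fixes_invariant_finite_set[of p C]
      by (simp add: pointwise_stabilizer_def carrier_AutR)
    then show ?thesis using psubset.prems by blast
  next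
    case False
    have "pointwise_stabilizer (p ` C) \<subseteq> K"
      using pointwise_stabilizer_image_subset[OF K p conj psubset.prems] .
    then have "pointwise_stabilizer (C \<inter> p ` C) \<subseteq> K"
      using pointwise_stabilizer_Int[OF K psubset.hyps(1) _ psubset.prems] psubset.hyps(1) by simp
    moreover have "C \<inter> p ` C \<subset> C" using False by blast
    ultimately show ?thesis using psubset.IH by blast
  qed
qed

theorem self_normalizing_open_subgroup_AutR:
  assumes K: "subgroup K AutR" and "openin AutR_top K"
  shows "self_normalizing AutR K"
  unfolding self_normalizing_def
proof (intro ballI impI)
  fix p assume p: "p \<in> carrier AutR" and "\<forall>k\<in>K. p \<otimes>\<^bsub>AutR\<^esub> k \<otimes>\<^bsub>AutR\<^esub> inv\<^bsub>AutR\<^esub> p \<in> K"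
  then have conj: "\<And>k. k \<in> K \<Longrightarrow> p \<circ> k \<circ> inv_into UNIV p \<in> K" by simp
  have "id \<in> K" using subgroup.one_closed[OF K] by simp
  then obtain A where "finite A" "pointwise_stabilizer A \<subseteq> K"
    using open_subgroup_contains_pointwise_stabilizer[OF \<open>openin AutR_top K\<close>] by blast
  then show "p \<in> K" using normalizing_element_in_subgroup_AutR[OF K p conj] by blast
qed

theorem proposition5p13:
  fixes H :: "'h monoid" and S :: "'h topology"
    and Z :: "'z set" and act :: "((real \<Rightarrow> real) \<times> 'h) \<Rightarrow> 'z \<Rightarrow> 'z"
  assumes "pro_oligomorphic H S"
    and "transitive_G_set (AutR \<times>\<times> H) (prod_topology AutR_top S) Z act"
  shows "\<exists>(X :: 'z set) a (Y :: 'z set) b.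
           transitive_G_set AutR AutR_top X a \<and>
           transitive_G_set H S Y b \<and>
           G_set_iso (AutR \<times>\<times> H) Z act (X \<times> Y) (prod_action a b)"
proof -
  have "group H" "topspace S = carrier H"
    using assms(1) by (auto simp: pro_oligomorphic_def topological_group_def)
  then show ?thesis
    using transitive_G_set_DirProd_splits[OF group_AutR topspace_AutR_top
        self_normalizing_open_subgroup_AutR _ _ assms(2)]
    by blast
qed

end
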